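(* Let $q=3^r>3$, and let $$\bar f_2(x_1,x_2)=t\bigl(x_1^{q-4}+x_2^{q-2}\bigr).$$ Then the polynomial $t\bigl(\bar f_2(x_1,x_2)+x_3^{q-2}\bigr)\in\mathbb{F}_q[x_1,x_2,x_3]$, reduced modulo $x_j^q-x_j$, has degree $3(q-2)$.
   Context: $\mathbb{F}_q$ is the finite field with $q$ elements, and $$t(x)=x+\sum_{k=0}^{q-2}x^k\in\mathbb{F}_q[x];$$ this polynomial swaps $0$ and $1$ and fixes every other element. Degree means the total degree of the reduced representative (degree $<q$ in each variable). *)

theory Defs
  imports Main "HOL-Library.Cardinality"
begin

text \<open>The polynomial t(x) = x + sum_{k=0}^{q-2} x^k over the finite field with q = CARD('a)
  elements, viewed via its evaluation map (0^0 = 1).\<close>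
definition tpoly :: "'a::{finite,field} \<Rightarrow> 'a" where
  "tpoly x = x + (\<Sum>k \<in> {0 .. CARD('a) - 2}. x ^ k)"

text \<open>c is the coefficient array of a reduced polynomial in F_q[x1,x2,x3]
  (degree < q in each variable) whose evaluation map is f.\<close>
definition is_reduced_rep ::
  "(nat \<Rightarrow> nat \<Rightarrow> nat \<Rightarrow> 'a::{finite,field}) \<Rightarrow> ('a \<Rightarrow> 'a \<Rightarrow> 'a \<Rightarrow> 'a) \<Rightarrow> bool" where
  "is_reduced_rep c f \<longleftrightarrow>
     (\<forall>i j k. c i j k \<noteq> 0 \<longrightarrow> i < CARD('a) \<and> j < CARD('a) \<and> k < CARD('a)) \<and>
     (\<forall>x y z. f x y z =
        (\<Sum>i<CARD('a). \<Sum>j<CARD('a). \<Sum>k<CARD('a). c i j k * x ^ i * y ^ j * z ^ k))"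

definition reduced_coeffs ::
  "('a::{finite,field} \<Rightarrow> 'a \<Rightarrow> 'a \<Rightarrow> 'a) \<Rightarrow> nat \<Rightarrow> nat \<Rightarrow> nat \<Rightarrow> 'a" where
  "reduced_coeffs f = (THE c. is_reduced_rep c f)"

definition reduced_degree :: "('a::{finite,field} \<Rightarrow> 'a \<Rightarrow> 'a \<Rightarrow> 'a) \<Rightarrow> nat" where
  "reduced_degree f = Max {i + j + k | i j k. reduced_coeffs f i j k \<noteq> 0}"

end

theory Submission
  imports Defs "HOL-Computational_Algebra.Polynomial"
begin

text \<open>
  By orthogonality of power sums over \<open>\<bbbF>\<^sub>q\<close>, the coefficient of \<open>x\<^sup>i y\<^sup>j z\<^sup>k\<close>
  (\<open>0 < i, j, k < q\<close>) in the reduced representative of \<open>f\<close> is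
  \<open>-\<Sum> f(x,y,z) x\<^sup>q\<^sup>-\<^sup>1\<^sup>-\<^sup>i y\<^sup>q\<^sup>-\<^sup>1\<^sup>-\<^sup>j z\<^sup>q\<^sup>-\<^sup>1\<^sup>-\<^sup>k\<close>.
  As functions \<open>x\<^sup>q\<^sup>-\<^sup>2 = 1/x\<close> and \<open>x\<^sup>q\<^sup>-\<^sup>4 = 1/x\<^sup>3\<close> (with \<open>1/0 = 0\<close>), and in
  characteristic 3 the maps \<open>x \<mapsto> 1/x\<^sup>3\<close>, \<open>y \<mapsto> 1/y\<close>, \<open>z \<mapsto> 1/z\<close> are bijections.
  If \<open>i + j + k > 3(q - 2)\<close>, some exponent equals \<open>q - 1\<close>, so one variable is summed
  against \<open>1\<close>; the resulting partial sum of \<open>f\<close> no longer depends on a second variable,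
  whose moment then vanishes. For \<open>i = j = k = q - 2\<close> the sum \<open>\<Sum> f(x,y,z) x y z\<close> is
  evaluated with \<open>t(w) = w + [w = 0] - [w = 1]\<close> and partial fractions; it is \<open>-14 = 1\<close>.
\<close>

section \<open>Power sums over a finite field\<close>

lemma of_nat_card_eq_0: "of_nat CARD('a::{finite,field}) = (0::'a)"
proof -
  have "(\<Sum>x\<in>UNIV. (x::'a) + 1) = (\<Sum>x\<in>UNIV. x)"
    by (rule sum.reindex_bij_witness[where i="\<lambda>x. x - 1" and j="\<lambda>x. x + 1"]) auto
  then show ?thesis by (simp add: sum.distrib)
qed

lemma card_field_ge_2: "2 \<le> CARD('a::{finite,field})"
proof -
  have "card {0::'a, 1} \<le> CARD('a)" by (intro card_mono) auto
  then show ?thesis by simp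
qed

lemma power_card_minus_1_eq_1:
  fixes a :: "'a::{finite,field}"
  assumes "a \<noteq> 0"
  shows "a ^ (CARD('a) - 1) = 1"
proof -
  let ?U = "UNIV - {0::'a}"
  have "(\<Prod>x\<in>?U. a * x) = (\<Prod>x\<in>?U. x)"
    by (rule prod.reindex_bij_witness[where i="\<lambda>x. x / a" and j="\<lambda>x. a * x"]) (use assms in auto)
  moreover have "(\<Prod>x\<in>?U. a * x) = a ^ (CARD('a) - 1) * (\<Prod>x\<in>?U. x)"
    by (simp add: prod.distrib card_Diff_singleton)
  ultimately show ?thesis by simp
qed

lemma power_card_eq_self: "x ^ CARD('a) = (x::'a::{finite,field})"
proof (cases "x = 0")
  case False
  have "x ^ CARD('a) = x ^ (CARD('a) - 1) * x"
    using card_field_ge_2[where 'a='a] by (simp flip: power_Suc2)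
  then show ?thesis using power_card_minus_1_eq_1[OF False] by simp
qed simp

lemma power_eq_power_mod_card_minus_1:
  fixes x :: "'a::{finite,field}"
  assumes "x \<noteq> 0"
  shows "x ^ m = x ^ (m mod (CARD('a) - 1))"
proof -
  have "x ^ m = (x ^ (CARD('a) - 1)) ^ (m div (CARD('a) - 1)) * x ^ (m mod (CARD('a) - 1))"
    by (simp flip: power_mult power_add)
  then show ?thesis using power_card_minus_1_eq_1[OF assms] by simp
qed

lemma power_card_minus_1_minus:
  fixes x :: "'a::{finite,field}"
  assumes "0 < k" "k < CARD('a) - 1"
  shows "x ^ (CARD('a) - 1 - k) = inverse (x ^ k)"
proof (cases "x = 0")
  case False
  have "x ^ (CARD('a) - 1 - k) * x ^ k = 1"
    using assms power_card_minus_1_eq_1[OF False] by (simp flip: power_add)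
  then show ?thesis by (metis inverse_unique mult.commute)
qed (use assms in \<open>simp add: power_0_left\<close>)

text \<open>With \<open>k = m mod (q - 1)\<close>, \<open>0 < k < q - 1\<close>; the polynomial \<open>x\<^sup>k - 1\<close> has at most
  \<open>k\<close> roots, so it cannot vanish on all \<open>q - 1\<close> units.\<close>
lemma exists_power_neq_1:
  assumes "\<not> (CARD('a::{finite,field}) - 1) dvd m"
  shows "\<exists>a::'a. a \<noteq> 0 \<and> a ^ m \<noteq> 1"
proof (rule ccontr)
  define k where "k = m mod (CARD('a) - 1)"
  have k: "0 < k" "k < CARD('a) - 1"
    using assms card_field_ge_2[where 'a='a] by (simp_all add: k_def mod_greater_zero_iff_not_dvd)
  assume "\<not> ?thesis"
  then have "x ^ k = 1" if "x \<noteq> 0" for x :: 'a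
    using that power_eq_power_mod_card_minus_1[OF that, of m] by (auto simp: k_def)
  then have roots: "UNIV - {0::'a} \<subseteq> {x. poly (monom 1 k - 1) x = 0}"
    by (auto simp: poly_monom)
  have "poly (monom (1::'a) k - 1) 0 \<noteq> 0"
    using k by (simp add: poly_monom power_0_left)
  then have "card {x. poly (monom (1::'a) k - 1) x = 0} \<le> k"
    using card_poly_roots_bound[of "monom (1::'a) k - 1"] degree_diff_le[of "monom (1::'a) k" k 1]
    by (force simp: degree_monom_le)
  moreover have "card (UNIV - {0::'a}) \<le> card {x. poly (monom (1::'a) k - 1) x = 0}"
    by (intro card_mono roots) simp
  ultimately show False using k by (simp add: card_Diff_singleton)
qed

lemma sum_UNIV_power:
  "(\<Sum>x\<in>UNIV. (x::'a::{finite,field}) ^ m) = (if 0 < m \<and> (CARD('a) - 1) dvd m then -1 else 0)"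
proof (cases "0 < m \<and> (CARD('a) - 1) dvd m")
  case True
  then have "x ^ m = (if x = 0 then 0 else 1)" for x :: 'a
    using power_eq_power_mod_card_minus_1[of x m] by auto
  then have "(\<Sum>x\<in>UNIV. (x::'a) ^ m) = of_nat (CARD('a) - 1)"
    by (simp add: sum.If_cases Compl_eq_Diff_UNIV card_Diff_singleton)
  also have "\<dots> = -1"
    using of_nat_card_eq_0[where 'a='a] card_field_ge_2[where 'a='a] by (simp add: of_nat_diff)
  finally show ?thesis using True by simp
next
  case False
  show ?thesis
  proof (cases "m = 0")
    case True then show ?thesis using of_nat_card_eq_0[where 'a='a] by simp
  next
    case m: False
    then obtain a :: 'a where a: "a \<noteq> 0" "a ^ m \<noteq> 1"
      using exists_power_neq_1 False by blast
    have "(\<Sum>x\<in>UNIV. (a * x) ^ m) = (\<Sum>x\<in>UNIV. x ^ m)"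
      by (rule sum.reindex_bij_witness[where i="\<lambda>x. x / a" and j="\<lambda>x. a * x"]) (use a in auto)
    then have "a ^ m * (\<Sum>x\<in>UNIV. x ^ m) = (\<Sum>x\<in>UNIV. x ^ m)"
      by (simp add: power_mult_distrib sum_distrib_left)
    then have "(a ^ m - 1) * (\<Sum>x\<in>UNIV. x ^ m) = 0"
      by (simp add: algebra_simps)
    then show ?thesis using a False by simp
  qed
qed

corollary sum_UNIV_power_eq_0:
  "m < CARD('a::{finite,field}) - 1 \<Longrightarrow> (\<Sum>x\<in>UNIV. (x::'a) ^ m) = 0"
  by (auto simp: sum_UNIV_power dest: dvd_imp_le)

section \<open>Reduced representatives\<close>

lemma sum3_separable:
  fixes F :: "'i \<Rightarrow> 'j \<Rightarrow> 'k \<Rightarrow> 'r::comm_semiring_1"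
  shows "(\<Sum>x\<in>X. \<Sum>y\<in>Y. \<Sum>z\<in>Z.
            (\<Sum>a\<in>A. \<Sum>b\<in>B. \<Sum>c\<in>C. F a b c * g a x * h b y * l c z) * p x * r y * s z)
       = (\<Sum>a\<in>A. \<Sum>b\<in>B. \<Sum>c\<in>C.
            F a b c * (\<Sum>x\<in>X. g a x * p x) * (\<Sum>y\<in>Y. h b y * r y) * (\<Sum>z\<in>Z. l c z * s z))"
proof -
  define G where "G = (\<lambda>(x, y, z) (a, b, c). F a b c * (g a x * p x) * (h b y * r y) * (l c z * s z))"
  have "(\<Sum>u\<in>X\<times>Y\<times>Z. \<Sum>v\<in>A\<times>B\<times>C. G u v) = (\<Sum>v\<in>A\<times>B\<times>C. \<Sum>u\<in>X\<times>Y\<times>Z. G u v)"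
    by (rule sum.swap)
  then show ?thesis
    by (simp add: G_def sum.cartesian_product' sum_distrib_left sum_distrib_right mult_ac)
qed

lemma pos_dvd_le_double_iff:
  fixes m n :: nat
  assumes "0 < n" "m \<le> 2 * n"
  shows "0 < m \<and> n dvd m \<longleftrightarrow> m = n \<or> m = 2 * n"
proof
  assume "0 < m \<and> n dvd m"
  then obtain k where "m = n * k" "0 < k" by (auto elim: dvdE)
  moreover from this have "k \<le> 2" using assms by simp
  ultimately show "m = n \<or> m = 2 * n" by (auto simp: le_Suc_eq numeral_2_eq_2)
qed (use assms in auto)

text \<open>\<open>g \<mapsto> \<Sum>x. g x * dual_monomial e x\<close> reads off the coefficient of \<open>x\<^sup>e\<close> in the
  reduced representative of \<open>g\<close>.\<close>
definition dual_monomial :: "nat \<Rightarrow> 'a::{finite,field} \<Rightarrow> 'a" where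
  "dual_monomial e x = (if e = 0 then 1 else 0) - x ^ (CARD('a) - 1 - e)"

lemma sum_power_mult_dual_monomial:
  assumes "i < CARD('a::{finite,field})" "e < CARD('a)"
  shows "(\<Sum>x\<in>UNIV. x ^ i * dual_monomial e (x::'a)) = (if i = e then 1 else 0)"
proof -
  define n where "n = CARD('a) - 1"
  have n: "0 < n" "i \<le> n" "e \<le> n"
    using assms card_field_ge_2[where 'a='a] by (auto simp: n_def)
  have "(\<Sum>x\<in>UNIV. x ^ i * dual_monomial e (x::'a))
      = (if e = 0 then \<Sum>x\<in>UNIV. x ^ i else 0) - (\<Sum>x\<in>UNIV. (x::'a) ^ (n - e + i))"
    by (simp add: dual_monomial_def right_diff_distrib sum_subtractf power_add mult.commute n_def)
  also have "\<dots> = (if i = e then 1 else 0)"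
  proof -
    have power_sum: "(\<Sum>x\<in>UNIV. (x::'a) ^ m) = (if 0 < m \<and> n dvd m then -1 else 0)" for m
      using sum_UNIV_power[of m, where 'a='a] by (simp add: n_def)
    have "(\<Sum>x\<in>UNIV. (x::'a) ^ i) = (if i = n then -1 else 0)"
      using pos_dvd_le_double_iff[of n i] n by (auto simp: power_sum)
    moreover have "(\<Sum>x\<in>UNIV. (x::'a) ^ (n - e + i)) = (if i = e \<or> (e = 0 \<and> i = n) then -1 else 0)"
      using pos_dvd_le_double_iff[of n "n - e + i"] n by (auto simp: power_sum)
    ultimately show ?thesis using n by auto
  qed
  finally show ?thesis .
qed

lemma sum_dual_monomial_mult_power:
  "(\<Sum>e<CARD('a). dual_monomial e a * x ^ e) = (if x = a then 1 else (0::'a::{finite,field}))"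
proof -
  define S where "S = (\<Sum>e<CARD('a). a ^ (CARD('a) - Suc e) * x ^ e)"
  have "dual_monomial e a * x ^ e = (if e = 0 then 1 else 0) - a ^ (CARD('a) - Suc e) * x ^ e" for e
    by (simp add: dual_monomial_def left_diff_distrib)
  then have "(\<Sum>e<CARD('a). dual_monomial e a * x ^ e) = 1 - S"
    using card_field_ge_2[where 'a='a] by (simp add: S_def sum_subtractf)
  moreover have "x ^ CARD('a) - a ^ CARD('a) = (x - a) * S"
    unfolding S_def by (rule power_diff_sumr2)
  then have "x \<noteq> a \<Longrightarrow> S = 1"
    by (simp add: power_card_eq_self)
  moreover have "S = of_nat CARD('a) * a ^ (CARD('a) - 1)" if "x = a"
    using that by (simp add: S_def flip: power_add)
  ultimately show ?thesis
    by (auto simp: of_nat_card_eq_0)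
qed

definition dual_coeffs :: "('a::{finite,field} \<Rightarrow> 'a \<Rightarrow> 'a \<Rightarrow> 'a) \<Rightarrow> nat \<Rightarrow> nat \<Rightarrow> nat \<Rightarrow> 'a" where
  "dual_coeffs f i j k =
     (if i < CARD('a) \<and> j < CARD('a) \<and> k < CARD('a) then
        \<Sum>x\<in>UNIV. \<Sum>y\<in>UNIV. \<Sum>z\<in>UNIV.
          f x y z * dual_monomial i x * dual_monomial j y * dual_monomial k z
      else 0)"

lemma is_reduced_rep_dual_coeffs: "is_reduced_rep (dual_coeffs f) f"
  unfolding is_reduced_rep_def
proof (intro conjI allI impI)
  fix x y z :: 'a
  have "(\<Sum>i<CARD('a). \<Sum>j<CARD('a). \<Sum>k<CARD('a). dual_coeffs f i j k * x ^ i * y ^ j * z ^ k)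
      = (\<Sum>a\<in>UNIV. \<Sum>b\<in>UNIV. \<Sum>c\<in>UNIV. f a b c
           * (\<Sum>i<CARD('a). dual_monomial i a * x ^ i)
           * (\<Sum>j<CARD('a). dual_monomial j b * y ^ j)
           * (\<Sum>k<CARD('a). dual_monomial k c * z ^ k))"
    by (simp add: dual_coeffs_def sum3_separable)
  also have "\<dots> = f x y z"
    by (simp add: sum_dual_monomial_mult_power if_distrib[of "times _"] cong: if_cong)
  finally show "f x y z = (\<Sum>i<CARD('a). \<Sum>j<CARD('a). \<Sum>k<CARD('a). dual_coeffs f i j k * x ^ i * y ^ j * z ^ k)"
    by simp
qed (simp_all add: dual_coeffs_def split: if_splits)

lemma is_reduced_rep_imp_eq_dual_coeffs:
  assumes "is_reduced_rep c f"
  shows "c = dual_coeffs f"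
proof (intro ext)
  fix i j k
  show "c i j k = dual_coeffs f i j k"
  proof (cases "i < CARD('a) \<and> j < CARD('a) \<and> k < CARD('a)")
    case True
    have f: "f = (\<lambda>x y z. \<Sum>i<CARD('a). \<Sum>j<CARD('a). \<Sum>k<CARD('a). c i j k * x ^ i * y ^ j * z ^ k)"
      using assms by (simp add: is_reduced_rep_def fun_eq_iff)
    have "dual_coeffs f i j k = (\<Sum>a<CARD('a). \<Sum>b<CARD('a). \<Sum>e<CARD('a). c a b e
        * (\<Sum>x\<in>UNIV. x ^ a * dual_monomial i x)
        * (\<Sum>y\<in>UNIV. y ^ b * dual_monomial j y)
        * (\<Sum>z\<in>UNIV. z ^ e * dual_monomial k z))"
      using True by (simp add: dual_coeffs_def f sum3_separable)
    also have "\<dots> = c i j k"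
      using True by (simp add: sum_power_mult_dual_monomial if_distrib[of "times _"] cong: if_cong)
    finally show ?thesis by simp
  next
    case False
    then show ?thesis using assms by (auto simp: is_reduced_rep_def dual_coeffs_def)
  qed
qed

lemma reduced_coeffs_eq_dual_coeffs: "reduced_coeffs f = dual_coeffs f"
  unfolding reduced_coeffs_def
  by (rule the1_equality) (auto intro: is_reduced_rep_dual_coeffs dest: is_reduced_rep_imp_eq_dual_coeffs)

lemma reduced_coeffs_eq_neg_moment:
  fixes f :: "'a::{finite,field} \<Rightarrow> 'a \<Rightarrow> 'a \<Rightarrow> 'a"
  assumes "0 < i" "i < CARD('a)" "0 < j" "j < CARD('a)" "0 < k" "k < CARD('a)"
  shows "reduced_coeffs f i j k = - (\<Sum>x\<in>UNIV. \<Sum>y\<in>UNIV. \<Sum>z\<in>UNIV.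
           f x y z * x ^ (CARD('a) - 1 - i) * y ^ (CARD('a) - 1 - j) * z ^ (CARD('a) - 1 - k))"
  using assms by (simp add: reduced_coeffs_eq_dual_coeffs dual_coeffs_def dual_monomial_def sum_negf)

lemma reduced_coeffs_eq_0:
  "\<not> (i < CARD('a) \<and> j < CARD('a) \<and> k < CARD('a)) \<Longrightarrow> reduced_coeffs (f :: 'a::{finite,field} \<Rightarrow> _) i j k = 0"
  by (auto simp: reduced_coeffs_eq_dual_coeffs dual_coeffs_def)

lemma reduced_degree_eqI:
  assumes "\<And>i j k. reduced_coeffs f i j k \<noteq> 0 \<Longrightarrow> i + j + k \<le> d"
    and "reduced_coeffs f a b c \<noteq> 0" "a + b + c = d"
  shows "reduced_degree f = d"
  unfolding reduced_degree_def
proof (rule Max_eqI)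
  show "finite {i + j + k |i j k. reduced_coeffs f i j k \<noteq> 0}"
    by (rule finite_subset[of _ "{..d}"]) (auto dest: assms(1))
qed (use assms in auto)

section \<open>Sums involving \<open>t\<close> and reciprocals\<close>

lemma tpoly_eq: "tpoly w = w + (if w = 0 then 1 else 0) - (if w = 1 then 1 else (0::'a::{finite,field}))"
proof -
  have "{0..CARD('a) - 2} = {..<CARD('a) - 1}"
    using card_field_ge_2[where 'a='a] by auto
  moreover have "(\<Sum>k<CARD('a) - 1. w ^ k) = (if w = 0 then 1 else if w = 1 then -1 else 0)"
  proof -
    consider "w = 0" | "w = 1" | "w \<noteq> 0" "w \<noteq> 1" by blast
    then show ?thesis
    proof cases
      case 1
      then show ?thesis using card_field_ge_2[where 'a='a]
        by (simp add: power_0_left sum.If_cases lessThan_def)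
    next
      case 2
      then show ?thesis using of_nat_card_eq_0[where 'a='a] card_field_ge_2[where 'a='a]
        by (simp add: of_nat_diff)
    next
      case 3
      then show ?thesis using power_card_minus_1_eq_1[of w] by (simp add: geometric_sum)
    qed
  qed
  ultimately show ?thesis by (auto simp: tpoly_def)
qed

lemma bij_inverse: "bij (inverse :: 'a::field \<Rightarrow> 'a)"
  by (rule involuntory_imp_bij) simp

lemma sum_tpoly_add_inverse_mult:
  fixes w :: "'a::{finite,field}"
  assumes "2 < CARD('a)"
  shows "(\<Sum>z\<in>UNIV. tpoly (w + inverse z) * z) = - 1 - inverse w - inverse (1 - w)"
proof -
  have level_set: "w + inverse z = c \<longleftrightarrow> z = inverse (c - w)" for z c :: 'a
    by (metis add_diff_cancel_left' diff_add_cancel inverse_inverse_eq)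
  have "tpoly (w + inverse z) * z = w * z + inverse z * z
      + (if z = inverse (- w) then z else 0) - (if z = inverse (1 - w) then z else 0)" for z
    using level_set[of z 0] level_set[of z 1] by (simp add: tpoly_eq algebra_simps)
  moreover have "inverse z * z = z ^ (CARD('a) - 1)" for z :: 'a
    using power_card_minus_1_eq_1[of z] assms by (cases "z = 0") (simp_all add: power_0_left)
  ultimately show ?thesis
    using assms by (simp add: sum.distrib sum_subtractf flip: sum_distrib_left)
      (simp add: sum_UNIV_power sum_UNIV_power_eq_0[of 1, simplified])
qed

lemma inverse_tpoly_add_inverse_one_minus:
  "inverse (tpoly w) + inverse (1 - tpoly w) = inverse w + inverse (1 - (w::'a::{finite,field}))"
  by (simp add: tpoly_eq)

lemma sum_inverse_mult_inverse_add:
  fixes A :: "'a::{finite,field}"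
  assumes "3 < CARD('a)"
  shows "(\<Sum>b\<in>UNIV. inverse b * inverse (A + b)) = 2 * inverse A ^ 2"
proof (cases "A = 0")
  case True
  have "(\<Sum>b\<in>UNIV. inverse b ^ 2) = (\<Sum>b\<in>UNIV. b ^ 2 :: 'a)"
    by (rule sum.reindex_bij_betw[OF bij_inverse])
  then show ?thesis
    using True assms sum_UNIV_power_eq_0[of 2, where 'a='a] by (simp add: power2_eq_square)
next
  case False
  have partial_fractions: "inverse b * inverse (A + b) = inverse A * (inverse b - inverse (A + b))
      + (if b = 0 then inverse A ^ 2 else 0) + (if b = - A then inverse A ^ 2 else 0)" for b
  proof -
    consider "b = 0" | "b = - A" | "b \<noteq> 0" "A + b \<noteq> 0"
      by (metis add.commute add_eq_0_iff)
    then show ?thesis by cases (use False in \<open>auto simp: field_simps power2_eq_square\<close>)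
  qed
  have "(\<Sum>b\<in>UNIV. inverse (A + b)) = (\<Sum>b\<in>UNIV. inverse b)"
    by (rule sum.reindex_bij_betw[OF bij_plus])
  then show ?thesis
    by (simp add: partial_fractions sum.distrib sum_subtractf flip: sum_distrib_left)
qed

lemma sum_mult_inverse_pair:
  fixes A :: "'a::{finite,field}"
  assumes "3 < CARD('a)"
  shows "(\<Sum>y\<in>UNIV. y * (inverse (A + inverse y) + inverse (1 - (A + inverse y))))
       = 2 * (inverse A ^ 2 - inverse (1 - A) ^ 2)"
proof -
  have "inverse (1 - (A + b)) = - inverse ((A - 1) + b)" for b :: 'a
    by (metis add.commute add_diff_eq diff_diff_eq2 inverse_minus_eq minus_diff_eq)
  then have "(\<Sum>y\<in>UNIV. y * (inverse (A + inverse y) + inverse (1 - (A + inverse y))))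
      = (\<Sum>b\<in>UNIV. inverse b * (inverse (A + b) - inverse ((A - 1) + b)))"
    using sum.reindex_bij_betw[OF bij_inverse, of "\<lambda>b. inverse b * (inverse (A + b) + inverse (1 - (A + b)))"]
    by simp
  also have "\<dots> = (\<Sum>b\<in>UNIV. inverse b * inverse (A + b)) - (\<Sum>b\<in>UNIV. inverse b * inverse ((A - 1) + b))"
    by (simp add: right_diff_distrib sum_subtractf)
  also have "\<dots> = 2 * (inverse A ^ 2 - inverse (A - 1) ^ 2)"
    using assms by (simp add: sum_inverse_mult_inverse_add right_diff_distrib)
  also have "inverse (A - 1) ^ 2 = inverse (1 - A) ^ 2"
    by (metis inverse_minus_eq minus_diff_eq power2_minus)
  finally show ?thesis .
qed

lemma sum_inverse_one_minus_power: "(\<Sum>s\<in>UNIV. inverse (1 - s) ^ k) = (\<Sum>s\<in>UNIV. (s::'a::{finite,field}) ^ k)"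
proof -
  have "bij (\<lambda>s::'a. 1 - s)"
    by (rule involuntory_imp_bij) simp
  then have "bij (\<lambda>s::'a. inverse (1 - s))"
    using bij_comp bij_inverse unfolding comp_def by blast
  then show ?thesis by (rule sum.reindex_bij_betw)
qed

lemma sum_inverse_mult_inverse_one_minus_power:
  assumes "0 < n" "n < CARD('a::{finite,field}) - 1"
  shows "(\<Sum>s\<in>UNIV. inverse s * inverse (1 - s) ^ n) = - (of_nat (n + 1) :: 'a)"
  using assms
proof (induction n rule: nat_induct_non_zero)
  case 1
  have "inverse s * inverse (1 - s) = inverse s + inverse (1 - s)
      - (if s = 0 then 1 else 0) - (if s = 1 then 1 else 0)" for s :: 'a
    by (cases "s = 0 \<or> s = 1") (auto simp: field_simps)
  moreover have "(\<Sum>s\<in>UNIV. inverse s) = (\<Sum>s\<in>UNIV. s :: 'a)"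
    by (rule sum.reindex_bij_betw[OF bij_inverse])
  ultimately show ?case
    using 1 sum_inverse_one_minus_power[of 1, where 'a='a] sum_UNIV_power_eq_0[of 1, where 'a='a]
    by (simp add: sum.distrib sum_subtractf)
next
  case (Suc n)
  have "inverse s * inverse (1 - s) ^ Suc n = inverse s * inverse (1 - s) ^ n + inverse (1 - s) ^ Suc n
      - (if s = 0 then 1 else 0)" for s :: 'a
  proof (cases "s = 0 \<or> s = 1")
    case False
    then have "inverse s * inverse (1 - s) = inverse s + inverse (1 - s)"
      by (simp add: field_simps)
    then show ?thesis using False
      by (simp add: algebra_simps flip: mult.assoc)
  qed (use Suc in \<open>auto simp: power_0_left\<close>)
  then show ?case
    using Suc sum_inverse_one_minus_power[of "Suc n", where 'a='a] sum_UNIV_power_eq_0[of "Suc n", where 'a='a]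
    by (simp add: sum.distrib sum_subtractf)
qed

text \<open>The polynomial of the theorem as a function, with \<open>x\<^sup>q\<^sup>-\<^sup>4\<close> and \<open>y\<^sup>q\<^sup>-\<^sup>2\<close>, \<open>z\<^sup>q\<^sup>-\<^sup>2\<close>
  rewritten as reciprocals.\<close>
definition nested_t :: "'a::{finite,field} \<Rightarrow> 'a \<Rightarrow> 'a \<Rightarrow> 'a" where
  "nested_t x y z = tpoly (tpoly (inverse (x ^ 3) + inverse y) + inverse z)"

lemma tpoly_tpoly_power_eq_nested_t:
  fixes x y z :: "'a::{finite,field}"
  assumes "4 < CARD('a)"
  shows "tpoly (tpoly (x ^ (CARD('a) - 4) + y ^ (CARD('a) - 2)) + z ^ (CARD('a) - 2)) = nested_t x y z"
proof -
  have "x ^ (CARD('a) - 4) = inverse (x ^ 3)"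
    using assms power_card_minus_1_minus[of 3 x] by simp
  moreover have "w ^ (CARD('a) - 2) = inverse w" for w :: 'a
    using assms power_card_minus_1_minus[of 1 w] by (simp add: numeral_2_eq_2)
  ultimately show ?thesis by (simp add: nested_t_def)
qed

lemma sum_nested_t_z: "(\<Sum>z\<in>UNIV. nested_t x y z) = (\<Sum>v\<in>UNIV. tpoly v)"
  using sum.reindex_bij_betw[OF bij_comp[OF bij_inverse bij_plus], of tpoly]
  by (simp add: nested_t_def comp_def)

lemma sum_nested_t_y: "(\<Sum>y\<in>UNIV. nested_t x y z) = (\<Sum>u\<in>UNIV. tpoly (tpoly u + inverse z))"
  using sum.reindex_bij_betw[OF bij_comp[OF bij_inverse bij_plus], of "\<lambda>u. tpoly (tpoly u + inverse z)"]
  by (simp add: nested_t_def comp_def)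

section \<open>Characteristic 3\<close>

context
  assumes char_3: "(3::'a::{finite,field}) = 0"
begin

lemma cube_diff: "(x - y) ^ 3 = x ^ 3 - (y::'a) ^ 3"
proof -
  have "(x - y) ^ 3 = x ^ 3 - y ^ 3 - 3 * (x ^ 2 * y - x * y ^ 2)"
    by (simp add: power3_eq_cube power2_eq_square algebra_simps)
  then show ?thesis by (simp add: char_3)
qed

lemma bij_cube: "bij (\<lambda>x::'a. x ^ 3)"
proof -
  have "inj (\<lambda>x::'a. x ^ 3)"
  proof (rule injI)
    fix x y :: 'a
    assume "x ^ 3 = y ^ 3"
    then have "(x - y) ^ 3 = 0" by (simp add: cube_diff)
    then show "x = y" by simp
  qed
  then show ?thesis by (simp add: bij_def finite_UNIV_inj_surj)
qed

lemma sum_nested_t_x: "(\<Sum>x\<in>UNIV. nested_t x y z) = (\<Sum>u\<in>UNIV. tpoly (tpoly u + inverse (z::'a)))"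
  using sum.reindex_bij_betw[OF bij_comp[OF bij_comp[OF bij_cube bij_inverse] bij_plus_right],
      of "\<lambda>u. tpoly (tpoly u + inverse z)"]
  by (simp add: nested_t_def comp_def)

text \<open>Summing \<open>nested_t\<close> over the variable of exponent \<open>0\<close> removes its dependence on
  \<open>x\<close> or \<open>y\<close>, whose moment of order \<open>< q - 1\<close> then vanishes.\<close>
lemma sum_nested_t_moment_eq_0:
  assumes "\<alpha> < CARD('a) - 1" "\<beta> < CARD('a) - 1" "\<alpha> = 0 \<or> \<beta> = 0 \<or> \<gamma> = 0"
  shows "(\<Sum>x\<in>UNIV. \<Sum>y\<in>UNIV. \<Sum>z\<in>UNIV. nested_t x y z * x ^ \<alpha> * y ^ \<beta> * (z::'a) ^ \<gamma>) = 0"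
proof -
  define C where "C = (\<Sum>v\<in>UNIV. tpoly (v::'a))"
  define K where "K z = (\<Sum>u\<in>UNIV. tpoly (tpoly u + inverse z))" for z :: 'a
  have vanish: "(\<Sum>x\<in>UNIV. (x::'a) ^ \<alpha>) = 0" "(\<Sum>y\<in>UNIV. (y::'a) ^ \<beta>) = 0"
    using assms sum_UNIV_power_eq_0 by auto
  consider "\<gamma> = 0" | "\<beta> = 0" | "\<alpha> = 0" using assms(3) by blast
  then show ?thesis
  proof cases
    case 1
    have "(\<Sum>x\<in>UNIV. \<Sum>y\<in>UNIV. \<Sum>z\<in>UNIV. nested_t x y z * x ^ \<alpha> * y ^ \<beta> * z ^ \<gamma>)
        = (\<Sum>x\<in>UNIV. \<Sum>y\<in>UNIV. x ^ \<alpha> * y ^ \<beta> * (\<Sum>z\<in>UNIV. nested_t x y z))"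
      using 1 by (simp add: sum_distrib_left mult_ac)
    also have "\<dots> = (\<Sum>x\<in>UNIV. x ^ \<alpha>) * (\<Sum>y\<in>UNIV. y ^ \<beta>) * C"
      by (simp add: sum_nested_t_z mult.assoc flip: C_def sum_distrib_left sum_distrib_right)
    finally show ?thesis by (simp add: vanish)
  next
    case 2
    have "(\<Sum>x\<in>UNIV. \<Sum>y\<in>UNIV. \<Sum>z\<in>UNIV. nested_t x y z * x ^ \<alpha> * y ^ \<beta> * z ^ \<gamma>)
        = (\<Sum>x\<in>UNIV. \<Sum>z\<in>UNIV. \<Sum>y\<in>UNIV. x ^ \<alpha> * z ^ \<gamma> * nested_t x y z)"
      using 2 by (simp add: mult_ac) (rule sum.cong[OF refl], rule sum.swap)
    also have "\<dots> = (\<Sum>x\<in>UNIV. x ^ \<alpha>) * (\<Sum>z\<in>UNIV. z ^ \<gamma> * K z)"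
      by (simp add: sum_nested_t_y mult.assoc flip: K_def sum_distrib_left sum_distrib_right)
    finally show ?thesis by (simp add: vanish)
  next
    case 3
    have "(\<Sum>x\<in>UNIV. \<Sum>y\<in>UNIV. \<Sum>z\<in>UNIV. nested_t x y z * x ^ \<alpha> * y ^ \<beta> * z ^ \<gamma>)
        = (\<Sum>y\<in>UNIV. \<Sum>x\<in>UNIV. \<Sum>z\<in>UNIV. y ^ \<beta> * z ^ \<gamma> * nested_t x y z)"
      using 3 by (simp add: mult_ac) (rule sum.swap)
    also have "\<dots> = (\<Sum>y\<in>UNIV. \<Sum>z\<in>UNIV. \<Sum>x\<in>UNIV. y ^ \<beta> * z ^ \<gamma> * nested_t x y z)"
      by (rule sum.cong[OF refl], rule sum.swap)
    also have "\<dots> = (\<Sum>y\<in>UNIV. y ^ \<beta>) * (\<Sum>z\<in>UNIV. z ^ \<gamma> * K z)"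
      by (simp add: sum_nested_t_x mult.assoc flip: K_def sum_distrib_left sum_distrib_right)
    finally show ?thesis by (simp add: vanish)
  qed
qed

lemma sum_nested_t_mult_xyz:
  assumes "9 \<le> CARD('a)"
  shows "(\<Sum>x\<in>UNIV. \<Sum>y\<in>UNIV. \<Sum>z\<in>UNIV. nested_t x y z * x * y * (z::'a)) = 1"
proof -
  let ?P = "\<lambda>w::'a. 1 + inverse w + inverse (1 - w)"
  have sum_z: "(\<Sum>z\<in>UNIV. nested_t x y z * x * y * z) = - (x * y * ?P (inverse (x ^ 3) + inverse y))"
    for x y :: 'a
  proof -
    let ?w = "inverse (x ^ 3) + inverse y"
    have "(\<Sum>z\<in>UNIV. nested_t x y z * x * y * z) = x * y * (\<Sum>z\<in>UNIV. tpoly (tpoly ?w + inverse z) * z)"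
      by (simp add: nested_t_def sum_distrib_left mult_ac)
    also have "\<dots> = - (x * y * (1 + (inverse (tpoly ?w) + inverse (1 - tpoly ?w))))"
      using assms by (simp only: sum_tpoly_add_inverse_mult) (simp add: algebra_simps)
    finally show ?thesis
      by (simp only: inverse_tpoly_add_inverse_one_minus add.assoc)
  qed
  have sum_y: "(\<Sum>y\<in>UNIV. - (x * y * ?P (inverse (x ^ 3) + inverse y)))
      = - 2 * (x ^ 7 - x * inverse (1 - inverse (x ^ 3)) ^ 2)" for x :: 'a
  proof -
    let ?A = "inverse (x ^ 3)"
    have "- (x * y * ?P (?A + inverse y))
        = - x * y - x * (y * (inverse (?A + inverse y) + inverse (1 - (?A + inverse y))))" for y
      by (simp add: algebra_simps)
    then have "(\<Sum>y\<in>UNIV. - (x * y * ?P (?A + inverse y)))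
        = - x * (\<Sum>y\<in>UNIV. y) - x * (\<Sum>y\<in>UNIV. y * (inverse (?A + inverse y)
            + inverse (1 - (?A + inverse y))))"
      by (simp only: sum_subtractf flip: sum_distrib_left)
    also have "\<dots> = - x * 0 - x * (2 * (inverse ?A ^ 2 - inverse (1 - ?A) ^ 2))"
      using assms sum_UNIV_power_eq_0[of 1, where 'a='a] sum_mult_inverse_pair[of ?A] by simp
    also have "\<dots> = - 2 * (x ^ 7 - x * inverse (1 - ?A) ^ 2)"
      by (simp add: algebra_simps power_mult_distrib flip: power_mult) (simp add: power_numeral_reduce)
    finally show ?thesis .
  qed
  have "(\<Sum>x\<in>UNIV. x * inverse (1 - inverse (x ^ 3)) ^ 2)
      = (\<Sum>s\<in>UNIV. inverse s * inverse (1 - inverse (inverse s ^ 3)) ^ 2 :: 'a)"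
    by (rule sum.reindex_bij_betw[OF bij_inverse, symmetric])
  also have "\<dots> = (\<Sum>s\<in>UNIV. inverse s * inverse (1 - s) ^ 6)"
  proof (rule sum.cong[OF refl])
    fix s :: 'a
    have "inverse (1 - inverse (inverse s ^ 3)) ^ 2 = inverse (1 - s) ^ 6"
      using cube_diff[of 1 s, symmetric] by (simp add: power_inverse flip: power_mult)
    then show "inverse s * inverse (1 - inverse (inverse s ^ 3)) ^ 2 = inverse s * inverse (1 - s) ^ 6"
      by (simp only:)
  qed
  also have "\<dots> = - 7"
    using assms sum_inverse_mult_inverse_one_minus_power[of 6, where 'a='a] by simp
  finally have "(\<Sum>x\<in>UNIV. \<Sum>y\<in>UNIV. \<Sum>z\<in>UNIV. nested_t x y z * x * y * z) = - 2 * (0 - (- 7) :: 'a)"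
    using assms sum_UNIV_power_eq_0[of 7, where 'a='a]
    by (simp add: sum_z sum_y sum_subtractf flip: sum_distrib_left)
  also have "\<dots> = 1 - 5 * 3" by simp
  finally show ?thesis by (simp add: char_3)
qed

lemma reduced_coeffs_nested_t_eq_0:
  assumes "9 \<le> CARD('a)" "3 * (CARD('a) - 2) < i + j + k"
  shows "reduced_coeffs (nested_t :: 'a \<Rightarrow> _) i j k = 0"
proof (cases "i < CARD('a) \<and> j < CARD('a) \<and> k < CARD('a)")
  case True
  have "(\<Sum>x\<in>UNIV. \<Sum>y\<in>UNIV. \<Sum>z\<in>UNIV. nested_t x y z
      * x ^ (CARD('a) - 1 - i) * y ^ (CARD('a) - 1 - j) * (z::'a) ^ (CARD('a) - 1 - k)) = 0"
    by (rule sum_nested_t_moment_eq_0) (use True assms in linarith)+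
  moreover have "0 < i" "0 < j" "0 < k"
    using True assms by linarith+
  ultimately show ?thesis
    using True by (simp add: reduced_coeffs_eq_neg_moment)
qed (rule reduced_coeffs_eq_0)

lemma reduced_coeffs_nested_t_top:
  assumes "9 \<le> CARD('a)"
  shows "reduced_coeffs (nested_t :: 'a \<Rightarrow> _) (CARD('a) - 2) (CARD('a) - 2) (CARD('a) - 2) = - 1"
proof -
  have "CARD('a) - 1 - (CARD('a) - 2) = 1" using assms by simp
  then show ?thesis
    using assms by (simp add: reduced_coeffs_eq_neg_moment sum_nested_t_mult_xyz)
qed

end

theorem mainTheorem16:
  fixes r :: nat
  assumes "CARD('a::{finite,field}) = 3 ^ r" and "CARD('a) > 3"
  shows "reduced_degree
           (\<lambda>(x1::'a) x2 x3. tpoly (tpoly (x1 ^ (CARD('a) - 4) + x2 ^ (CARD('a) - 2))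
                                   + x3 ^ (CARD('a) - 2)))
         = 3 * (CARD('a) - 2)"
proof -
  have "(3::nat) ^ 1 < 3 ^ r"
    using assms by simp
  then have "2 \<le> r"
    using power_strict_increasing_iff[of "3::nat" 1 r] by simp
  then have card_ge_9: "9 \<le> CARD('a)"
    using assms(1) power_increasing[of 2 r "3::nat"] by simp
  have char_3: "(3::'a) = 0"
    using of_nat_card_eq_0[where 'a='a] assms(1) by simp
  have "(\<lambda>(x1::'a) x2 x3. tpoly (tpoly (x1 ^ (CARD('a) - 4) + x2 ^ (CARD('a) - 2)) + x3 ^ (CARD('a) - 2)))
      = nested_t"
    using card_ge_9 by (simp add: fun_eq_iff tpoly_tpoly_power_eq_nested_t)
  moreover have "reduced_degree (nested_t :: 'a \<Rightarrow> _) = 3 * (CARD('a) - 2)"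
  proof (rule reduced_degree_eqI[of _ _ "CARD('a) - 2" "CARD('a) - 2" "CARD('a) - 2"])
    show "i + j + k \<le> 3 * (CARD('a) - 2)" if "reduced_coeffs (nested_t :: 'a \<Rightarrow> _) i j k \<noteq> 0" for i j k
      using that reduced_coeffs_nested_t_eq_0[OF char_3 card_ge_9] not_le by blast
  qed (use reduced_coeffs_nested_t_top[OF char_3 card_ge_9] in auto)
  ultimately show ?thesis by simp
qed

end
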